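(* Let $N\ge2$ and let $U(\omega)$, $\omega\in\mathbb{R}$, be a smooth function with values in the $N\times N$ unitary matrices. Then there exist $K\le N(N-1)/2$ pairs of indices $(m_k,n_k)$, $1\le m_k<n_k\le N$, and matrix-valued functions $T_{m_kn_k}(\omega)$, $k=1,\dots,K$, each of which is, for every $\omega$, an $N\times N$ two-level unitary acting on modes $m_k,n_k$, such that $$U(\omega)=\prod_{k=1}^{K}T_{m_kn_k}(\omega)\qquad\text{for all }\omega\in\mathbb{R}.$$
   Context: An $N\times N$ two-level unitary acting on modes $m<n$ is a unitary matrix that coincides with the identity except in the rows and columns $m,n$, where its $2\times2$ submatrix (rows/columns $m,n$) has the form $\begin{pmatrix}\mathrm{e}^{\mathrm{i}\phi}a & -b\\ \mathrm{e}^{\mathrm{i}\phi}b^* & a^*\end{pmatrix}$ with $a,b\in\mathbb{C}$, $|a|^2+|b|^2=1$, $\phi\in\mathbb{R}$ (all allowed to depend on $\omega$). ${}^*$ is complex conjugation. *)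

theory Defs
  imports "HOL-Analysis.Analysis" "Jordan_Normal_Form.Matrix"
begin

definition smooth_fun :: "(real \<Rightarrow> complex) \<Rightarrow> bool" where
  "smooth_fun f \<longleftrightarrow>
     (\<exists>D :: nat \<Rightarrow> real \<Rightarrow> complex. D 0 = f \<and>
        (\<forall>k t. (D k has_vector_derivative D (Suc k) t) (at t)))"

definition adj_mat :: "complex mat \<Rightarrow> complex mat" where
  "adj_mat A = mat (dim_col A) (dim_row A) (\<lambda>(i, j). cnj (A $$ (j, i)))"

definition unitary_mat :: "nat \<Rightarrow> complex mat \<Rightarrow> bool" where
  "unitary_mat N A \<longleftrightarrow> A \<in> carrier_mat N N \<and> A * adj_mat A = 1\<^sub>m N \<and> adj_mat A * A = 1\<^sub>m N"

definition two_level_mat :: "nat \<Rightarrow> nat \<Rightarrow> nat \<Rightarrow> complex \<Rightarrow> complex \<Rightarrow> real \<Rightarrow> complex mat" where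
  "two_level_mat N m n a b \<phi> = mat N N (\<lambda>(i, j).
      if i = m \<and> j = m then cis \<phi> * a
      else if i = m \<and> j = n then - b
      else if i = n \<and> j = m then cis \<phi> * cnj b
      else if i = n \<and> j = n then cnj a
      else if i = j then 1 else 0)"

definition two_level_unitary :: "nat \<Rightarrow> nat \<Rightarrow> nat \<Rightarrow> complex mat \<Rightarrow> bool" where
  "two_level_unitary N m n T \<longleftrightarrow> m < n \<and> n < N \<and> unitary_mat N T \<and>
     (\<exists>a b \<phi>. (cmod a)\<^sup>2 + (cmod b)\<^sup>2 = 1 \<and> T = two_level_mat N m n a b \<phi>)"

end

theory Submission
  imports Defs
begin

text \<open>Givens elimination. Multiplying from the left by a two-level unitary on modes \<open>(s, t)\<close>
  combines rows \<open>s\<close> and \<open>t\<close> so that the entry in row \<open>t\<close> of column \<open>s\<close> vanishes and the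
  one in row \<open>s\<close> becomes real and non-negative. Doing this for \<open>t = s + 1, \<dots>, N - 1\<close> turns
  column \<open>s\<close> into a non-negative multiple of \<open>e\<^sub>s\<close>; unitarity then forces row and column \<open>s\<close>
  to be those of the identity. After the columns \<open>s = 0, \<dots>, N - 2\<close> only a diagonal
  \<open>diag(1, \<dots>, 1, c)\<close> with \<open>|c| = 1\<close> remains. It is two-level on the last two modes, and
  two-level unitaries on fixed modes are closed under products, so it is absorbed into the last
  factor: exactly \<open>N(N - 1)/2\<close> factors, on a list of mode pairs that does not depend on \<open>U\<close>.
  Hence the factorization can be chosen for each \<open>\<omega>\<close> separately.\<close>

lemma index_mult_mat_sum:
  assumes "dim_col A = N" "dim_row B = N" "i < dim_row A" "j < dim_col B"
  shows "(A * B) $$ (i, j) = (\<Sum>k<N. A $$ (i, k) * B $$ (k, j))"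
  using assms by (simp add: scalar_prod_def lessThan_atLeast0)

lemma sum_lessThan_supported_pair:
  fixes f :: "nat \<Rightarrow> 'a::comm_monoid_add"
  assumes "m \<noteq> n" "m < N" "n < N" "\<And>k. k < N \<Longrightarrow> k \<noteq> m \<Longrightarrow> k \<noteq> n \<Longrightarrow> f k = 0"
  shows "(\<Sum>k<N. f k) = f m + f n"
proof -
  have "(\<Sum>k<N. f k) = (\<Sum>k\<in>{m, n}. f k)"
    by (rule sum.mono_neutral_right) (use assms in auto)
  then show ?thesis using assms by simp
qed

lemma sum_lessThan_supported_single:
  fixes f :: "nat \<Rightarrow> 'a::comm_monoid_add"
  assumes "m < N" "\<And>k. k < N \<Longrightarrow> k \<noteq> m \<Longrightarrow> f k = 0"
  shows "(\<Sum>k<N. f k) = f m"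
proof -
  have "(\<Sum>k<N. f k) = (\<Sum>k\<in>{m}. f k)"
    by (rule sum.mono_neutral_right) (use assms in auto)
  then show ?thesis by simp
qed

subsection \<open>Conjugate transpose and unitary matrices\<close>

lemma dim_adj_mat[simp]:
  "dim_row (adj_mat A) = dim_col A" "dim_col (adj_mat A) = dim_row A"
  by (auto simp: adj_mat_def)

lemma index_adj_mat[simp]:
  "i < dim_col A \<Longrightarrow> j < dim_row A \<Longrightarrow> adj_mat A $$ (i, j) = cnj (A $$ (j, i))"
  by (auto simp: adj_mat_def)

lemma adj_mat_adj_mat[simp]: "adj_mat (adj_mat A) = A"
  by (rule eq_matI) auto

lemma adj_mat_carrier[simp]: "A \<in> carrier_mat n m \<Longrightarrow> adj_mat A \<in> carrier_mat m n"
  unfolding carrier_mat_def by simp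

lemma adj_mat_mult:
  assumes "A \<in> carrier_mat N K" "B \<in> carrier_mat K M"
  shows "adj_mat (A * B) = adj_mat B * adj_mat A"
proof (rule eq_matI)
  fix i j assume ij: "i < dim_row (adj_mat B * adj_mat A)" "j < dim_col (adj_mat B * adj_mat A)"
  have "adj_mat (A * B) $$ (i, j) = cnj ((A * B) $$ (j, i))"
    using ij assms by auto
  also have "\<dots> = cnj (\<Sum>k<K. A $$ (j, k) * B $$ (k, i))"
    using ij assms by (subst index_mult_mat_sum) auto
  also have "\<dots> = (\<Sum>k<K. adj_mat B $$ (i, k) * adj_mat A $$ (k, j))"
    using ij assms by (auto simp: cnj_sum mult.commute intro!: sum.cong)
  also have "\<dots> = (adj_mat B * adj_mat A) $$ (i, j)"
    using ij assms by (subst index_mult_mat_sum) auto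
  finally show "adj_mat (A * B) $$ (i, j) = (adj_mat B * adj_mat A) $$ (i, j)" .
qed (use assms in auto)

lemma unitary_mat_adj: "unitary_mat N A \<Longrightarrow> unitary_mat N (adj_mat A)"
  by (auto simp: unitary_mat_def)

lemma mult_adj_mat_eq_one:
  assumes "A \<in> carrier_mat N N" "A * adj_mat A = 1\<^sub>m N"
    and "B \<in> carrier_mat N N" "B * adj_mat B = 1\<^sub>m N"
  shows "A * B * adj_mat (A * B) = 1\<^sub>m N"
proof -
  have "A * B * adj_mat (A * B) = A * (B * (adj_mat B * adj_mat A))"
  proof -
    have "adj_mat B * adj_mat A \<in> carrier_mat N N"
      using assms by (metis adj_mat_carrier mult_carrier_mat)
    then show ?thesis
      using assms by (simp add: adj_mat_mult assoc_mult_mat[OF assms(1,3)])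
  qed
  also have "B * (adj_mat B * adj_mat A) = adj_mat A"
    using assms by (simp add: assoc_mult_mat[of B N N _ N _ N, symmetric])
  also have "A * adj_mat A = 1\<^sub>m N"
    by (fact assms(2))
  finally show ?thesis .
qed

lemma unitary_mat_mult:
  assumes "unitary_mat N A" "unitary_mat N B"
  shows "unitary_mat N (A * B)"
proof -
  have A: "A \<in> carrier_mat N N" "A * adj_mat A = 1\<^sub>m N" "adj_mat A * A = 1\<^sub>m N"
    and B: "B \<in> carrier_mat N N" "B * adj_mat B = 1\<^sub>m N" "adj_mat B * B = 1\<^sub>m N"
    using assms unfolding unitary_mat_def by auto
  have "adj_mat (A * B) * (A * B) = adj_mat B * adj_mat A * adj_mat (adj_mat B * adj_mat A)"
    using A B adj_mat_mult[of "adj_mat B" N N "adj_mat A" N] by (simp add: adj_mat_mult)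
  also have "\<dots> = 1\<^sub>m N"
    using A B by (intro mult_adj_mat_eq_one) auto
  finally show ?thesis
    using A B mult_adj_mat_eq_one[of A N B] unfolding unitary_mat_def by auto
qed

lemma unitary_mat_adj_mult_cancel:
  assumes "unitary_mat N H" "U \<in> carrier_mat N N"
  shows "adj_mat H * (H * U) = U"
  using assms unfolding unitary_mat_def
  by (simp add: assoc_mult_mat[symmetric, of _ N N _ N])

lemma unitary_mat_unit_column:
  assumes "unitary_mat N V" "j < N" "\<forall>i<N. i \<noteq> j \<longrightarrow> V $$ (i, j) = 0"
  shows "cmod (V $$ (j, j)) = 1" "\<forall>k<N. k \<noteq> j \<longrightarrow> V $$ (j, k) = 0"
proof -
  have V: "V \<in> carrier_mat N N" "adj_mat V * V = 1\<^sub>m N"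
    using assms(1) unfolding unitary_mat_def by auto
  have column: "(adj_mat V * V) $$ (k, j) = cnj (V $$ (j, k)) * V $$ (j, j)" if "k < N" for k
    using V assms that by (subst index_mult_mat_sum, auto) (subst sum_lessThan_supported_single[of j], auto)
  have "complex_of_real ((cmod (V $$ (j, j)))\<^sup>2) = 1"
    using column[of j] V assms(2) by (simp only: complex_norm_square) (simp add: mult.commute)
  then have "(cmod (V $$ (j, j)))\<^sup>2 = 1"
    by (simp only: of_real_eq_1_iff)
  then show unit: "cmod (V $$ (j, j)) = 1"
    using norm_ge_zero[of "V $$ (j, j)"] by (auto simp: power2_eq_1_iff)
  have "V $$ (j, j) \<noteq> 0"
    using unit by auto
  then show "\<forall>k<N. k \<noteq> j \<longrightarrow> V $$ (j, k) = 0"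
    using column V assms(2) by fastforce
qed

subsection \<open>Two-level matrices\<close>

lemma dim_two_level_mat[simp]:
  "dim_row (two_level_mat N m n a b \<phi>) = N" "dim_col (two_level_mat N m n a b \<phi>) = N"
  by (auto simp: two_level_mat_def)

lemma two_level_mat_carrier[simp]: "two_level_mat N m n a b \<phi> \<in> carrier_mat N N"
  by (auto simp: two_level_mat_def)

lemma index_two_level_mat:
  assumes "i < N" "j < N"
  shows "two_level_mat N m n a b \<phi> $$ (i, j) =
    (if i = m \<and> j = m then cis \<phi> * a else if i = m \<and> j = n then - b
     else if i = n \<and> j = m then cis \<phi> * cnj b else if i = n \<and> j = n then cnj a
     else if i = j then 1 else 0)"
  using assms by (simp add: two_level_mat_def)

lemma index_two_level_mat_mult:
  assumes "m < n" "n < N" "dim_row M = N" "i < N" "j < dim_col M"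
  shows "(two_level_mat N m n a b \<phi> * M) $$ (i, j) =
    (if i = m then cis \<phi> * a * M $$ (m, j) - b * M $$ (n, j)
     else if i = n then cis \<phi> * cnj b * M $$ (m, j) + cnj a * M $$ (n, j)
     else M $$ (i, j))"
proof -
  have "(two_level_mat N m n a b \<phi> * M) $$ (i, j) =
      (\<Sum>k<N. two_level_mat N m n a b \<phi> $$ (i, k) * M $$ (k, j))"
    using assms by (intro index_mult_mat_sum) auto
  then show ?thesis
    using assms
    by (cases "i = m \<or> i = n")
       (auto simp: two_level_mat_def sum_lessThan_supported_pair[of m n]
                   sum_lessThan_supported_single[of i])
qed

lemma adj_two_level_mat:
  assumes "m < n" "n < N"
  shows "adj_mat (two_level_mat N m n a b \<phi>) =
    two_level_mat N m n (cnj a) (- cis (- \<phi>) * b) (- \<phi>)"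
  using assms by (intro eq_matI) (auto simp: two_level_mat_def cis_cnj cis_mult)

lemma two_level_mat_mult:
  assumes "m < n" "n < N"
  shows "two_level_mat N m n a b \<phi> * two_level_mat N m n a' b' \<phi>' =
    two_level_mat N m n (a * a' - cis (- \<phi>) * b * cnj b') (cis \<phi> * a * b' + b * cnj a') (\<phi> + \<phi>')"
    (is "?L = ?R")
proof (rule eq_matI)
  fix i j
  assume "i < dim_row ?R" "j < dim_col ?R"
  then show "?L $$ (i, j) = ?R $$ (i, j)"
    using assms
    by (subst index_two_level_mat_mult)
       (simp_all add: two_level_mat_def cis_cnj cis_mult[symmetric] cis_inverse[symmetric]
                      field_simps del: cis_inverse)
qed simp_all

lemma two_level_mat_mult_adj:
  assumes "m < n" "n < N"
  shows "two_level_mat N m n a b \<phi> * adj_mat (two_level_mat N m n a b \<phi>) =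
    two_level_mat N m n (a * cnj a + b * cnj b) 0 0"
  using assms
  by (simp add: adj_two_level_mat two_level_mat_mult cis_cnj cis_inverse[symmetric]
                field_simps del: cis_inverse)

lemma two_level_mat_one:
  assumes "m \<noteq> n"
  shows "two_level_mat N m n 1 0 0 = 1\<^sub>m N"
proof (rule eq_matI)
  fix i j
  assume "i < dim_row (1\<^sub>m N :: complex mat)" "j < dim_col (1\<^sub>m N :: complex mat)"
  then show "two_level_mat N m n 1 0 0 $$ (i, j) = 1\<^sub>m N $$ (i, j)"
    using assms by (cases "i = j") (simp_all add: two_level_mat_def)
qed (simp_all add: two_level_mat_def)

lemma norm_pair_eq_1_iff:
  "(cmod a)\<^sup>2 + (cmod b)\<^sup>2 = 1 \<longleftrightarrow> a * cnj a + b * cnj b = 1"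
proof -
  have "a * cnj a + b * cnj b = complex_of_real ((cmod a)\<^sup>2 + (cmod b)\<^sup>2)"
    by (simp only: of_real_add complex_norm_square)
  then show ?thesis
    by (metis of_real_eq_1_iff)
qed

lemma two_level_mat_unitary:
  assumes "m < n" "n < N" "(cmod a)\<^sup>2 + (cmod b)\<^sup>2 = 1"
  shows "unitary_mat N (two_level_mat N m n a b \<phi>)"
proof -
  let ?T = "two_level_mat N m n a b \<phi>"
  let ?S = "two_level_mat N m n (cnj a) (- cis (- \<phi>) * b) (- \<phi>)"
  have adj: "adj_mat ?T = ?S"
    by (rule adj_two_level_mat[OF assms(1,2)])
  have one: "two_level_mat N m n 1 0 0 = 1\<^sub>m N"
    using assms(1) by (simp add: two_level_mat_one)
  have "(cmod (cnj a))\<^sup>2 + (cmod (- cis (- \<phi>) * b))\<^sup>2 = 1"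
    using assms(3) by (simp add: norm_mult)
  then have "?S * adj_mat ?S = 1\<^sub>m N"
    by (simp only: two_level_mat_mult_adj[OF assms(1,2)] norm_pair_eq_1_iff one)
  then have "adj_mat ?T * ?T = 1\<^sub>m N"
    by (simp only: adj[symmetric] adj_mat_adj_mat)
  moreover have "?T * adj_mat ?T = 1\<^sub>m N"
    using assms(3) by (simp only: two_level_mat_mult_adj[OF assms(1,2)] norm_pair_eq_1_iff one)
  ultimately show ?thesis
    unfolding unitary_mat_def by simp
qed

lemma two_level_unitary_iff:
  "two_level_unitary N m n T \<longleftrightarrow>
     m < n \<and> n < N \<and> unitary_mat N T \<and> (\<exists>a b \<phi>. T = two_level_mat N m n a b \<phi>)"
proof (intro iffI)
  assume "m < n \<and> n < N \<and> unitary_mat N T \<and> (\<exists>a b \<phi>. T = two_level_mat N m n a b \<phi>)"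
  then obtain a b \<phi> where mn: "m < n" "n < N" and T: "unitary_mat N T" "T = two_level_mat N m n a b \<phi>"
    by blast
  have "two_level_mat N m n (a * cnj a + b * cnj b) 0 0 = 1\<^sub>m N"
    using T mn by (simp add: unitary_mat_def two_level_mat_mult_adj)
  then have "two_level_mat N m n (a * cnj a + b * cnj b) 0 0 $$ (m, m) = 1"
    using mn by simp
  then have "a * cnj a + b * cnj b = 1"
    using mn by (simp add: two_level_mat_def)
  then show "two_level_unitary N m n T"
    using mn T norm_pair_eq_1_iff unfolding two_level_unitary_def by metis
qed (auto simp: two_level_unitary_def)

lemma two_level_unitary_two_level_mat:
  "m < n \<Longrightarrow> n < N \<Longrightarrow> (cmod a)\<^sup>2 + (cmod b)\<^sup>2 = 1 \<Longrightarrow>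
    two_level_unitary N m n (two_level_mat N m n a b \<phi>)"
  unfolding two_level_unitary_iff by (metis two_level_mat_unitary)

lemma two_level_unitary_adj:
  "two_level_unitary N m n T \<Longrightarrow> two_level_unitary N m n (adj_mat T)"
  unfolding two_level_unitary_iff by (metis adj_two_level_mat unitary_mat_adj)

lemma two_level_unitary_mult:
  "two_level_unitary N m n T \<Longrightarrow> two_level_unitary N m n T' \<Longrightarrow> two_level_unitary N m n (T * T')"
  unfolding two_level_unitary_iff by (metis two_level_mat_mult unitary_mat_mult)

subsection \<open>Givens elimination\<close>

lemma givens_coefficients:
  fixes x y :: complex
  obtains a b r where "(cmod a)\<^sup>2 + (cmod b)\<^sup>2 = 1" "cnj b * x + cnj a * y = 0"
    "r \<ge> 0" "a * x - b * y = complex_of_real r"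
proof (cases "x = 0 \<and> y = 0")
  case True
  then show ?thesis
    using that[of 1 0 0] by simp
next
  case False
  define \<rho> where "\<rho> = sqrt ((cmod x)\<^sup>2 + (cmod y)\<^sup>2)"
  have \<rho>2: "\<rho>\<^sup>2 = (cmod x)\<^sup>2 + (cmod y)\<^sup>2"
    unfolding \<rho>_def by simp
  have \<rho>: "\<rho> > 0"
    using False unfolding \<rho>_def by (simp add: sum_power2_gt_zero_iff)
  define a where "a = cnj x / complex_of_real \<rho>"
  define b where "b = - cnj y / complex_of_real \<rho>"
  show ?thesis
  proof (rule that[of a b \<rho>])
    show "(cmod a)\<^sup>2 + (cmod b)\<^sup>2 = 1"
      unfolding a_def b_def using \<rho> \<rho>2 False
      by (simp add: norm_divide power_divide add_divide_distrib[symmetric])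
    show "cnj b * x + cnj a * y = 0"
      unfolding a_def b_def by (simp add: field_simps)
    show "\<rho> \<ge> 0"
      using \<rho> by simp
    have "a * x - b * y = (x * cnj x + y * cnj y) / complex_of_real \<rho>"
      unfolding a_def b_def by (simp add: field_simps add_divide_distrib)
    also have "x * cnj x + y * cnj y = complex_of_real (\<rho>\<^sup>2)"
      unfolding \<rho>2 by (simp only: of_real_add complex_norm_square)
    also have "complex_of_real (\<rho>\<^sup>2) / complex_of_real \<rho> = complex_of_real \<rho>"
      using \<rho> by (simp add: power2_eq_square)
    finally show "a * x - b * y = complex_of_real \<rho>" .
  qed
qed

definition leading_identity :: "nat \<Rightarrow> nat \<Rightarrow> complex mat \<Rightarrow> bool" where
  "leading_identity N s V \<longleftrightarrow>
     (\<forall>i<N. \<forall>j<N. i < s \<or> j < s \<longrightarrow> V $$ (i, j) = (if i = j then 1 else 0))"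

lemma givens_rotation:
  assumes "s < t" "t < N" "V \<in> carrier_mat N N" "leading_identity N s V"
  obtains G where "two_level_unitary N s t G" "leading_identity N s (G * V)"
    "(G * V) $$ (t, s) = 0" "\<exists>r\<ge>0. (G * V) $$ (s, s) = complex_of_real r"
    "\<And>i. i \<noteq> s \<Longrightarrow> i \<noteq> t \<Longrightarrow> i < N \<Longrightarrow> (G * V) $$ (i, s) = V $$ (i, s)"
proof -
  obtain a b r where ab: "(cmod a)\<^sup>2 + (cmod b)\<^sup>2 = 1"
    and zero: "cnj b * V $$ (s, s) + cnj a * V $$ (t, s) = 0"
    and r: "r \<ge> 0" "a * V $$ (s, s) - b * V $$ (t, s) = complex_of_real r"
    by (rule givens_coefficients)
  let ?G = "two_level_mat N s t a b 0"
  have GV: "(?G * V) $$ (i, j) =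
      (if i = s then a * V $$ (s, j) - b * V $$ (t, j)
       else if i = t then cnj b * V $$ (s, j) + cnj a * V $$ (t, j)
       else V $$ (i, j))" if "i < N" "j < N" for i j
    using index_two_level_mat_mult[OF assms(1,2), of V i j a b 0] that assms(3) by simp
  have "leading_identity N s (?G * V)"
    unfolding leading_identity_def
  proof (intro allI impI)
    fix i j
    assume ij: "i < N" "j < N" "i < s \<or> j < s"
    have "V $$ (i', j) = (if i' = j then 1 else 0)" if "i' < N" "i' < s \<or> j < s" for i'
      using assms(4) ij that unfolding leading_identity_def by blast
    then show "(?G * V) $$ (i, j) = (if i = j then 1 else 0)"
      using ij assms(1,2) by (auto simp: GV)
  qed
  then show ?thesis
    using that[of ?G] two_level_unitary_two_level_mat[OF assms(1,2) ab] assms(1,2) zero r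
    by (auto simp: GV)
qed

lemma column_elimination:
  assumes "Suc s \<le> t" "t \<le> N" "unitary_mat N V" "leading_identity N s V"
  shows "\<exists>Gs W. list_all2 (\<lambda>(m, n). two_level_unitary N m n) (map (Pair s) [Suc s..<t]) Gs \<and>
      V = foldr (*) Gs W \<and> unitary_mat N W \<and> leading_identity N s W \<and>
      (\<forall>i. s < i \<and> i < t \<longrightarrow> W $$ (i, s) = 0) \<and>
      (Suc s < t \<longrightarrow> (\<exists>r\<ge>0. W $$ (s, s) = complex_of_real r))"
  using assms(1,2)
proof (induction t rule: dec_induct)
  case base
  show ?case
    using assms(3,4) by (intro exI[of _ "[]"] exI[of _ V]) auto
next
  case (step t)
  then obtain Gs W where Gs: "list_all2 (\<lambda>(m, n). two_level_unitary N m n) (map (Pair s) [Suc s..<t]) Gs"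
    and V: "V = foldr (*) Gs W"
    and W: "unitary_mat N W" "leading_identity N s W" "\<forall>i. s < i \<and> i < t \<longrightarrow> W $$ (i, s) = 0"
    by auto
  have st: "s < t" "t < N"
    using step by auto
  obtain G where G: "two_level_unitary N s t G" "leading_identity N s (G * W)"
    "(G * W) $$ (t, s) = 0" "\<exists>r\<ge>0. (G * W) $$ (s, s) = complex_of_real r"
    "\<And>i. i \<noteq> s \<Longrightarrow> i \<noteq> t \<Longrightarrow> i < N \<Longrightarrow> (G * W) $$ (i, s) = W $$ (i, s)"
    using givens_rotation[OF st _ W(2)] W(1) unfolding unitary_mat_def by metis
  have unitary_G: "unitary_mat N G"
    using G(1) unfolding two_level_unitary_def by blast
  have "W = adj_mat G * (G * W)"
    using unitary_mat_adj_mult_cancel[OF unitary_G] W(1) unfolding unitary_mat_def by simp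
  then have "V = foldr (*) (Gs @ [adj_mat G]) (G * W)"
    using V by simp
  moreover have "list_all2 (\<lambda>(m, n). two_level_unitary N m n) (map (Pair s) [Suc s..<Suc t])
      (Gs @ [adj_mat G])"
    using Gs G(1) step(1) by (simp add: list_all2_appendI two_level_unitary_adj)
  moreover have "\<forall>i. s < i \<and> i < Suc t \<longrightarrow> (G * W) $$ (i, s) = 0"
    using G(3,5) W(3) st by (metis less_SucE nat_neq_iff order.strict_trans)
  ultimately show ?case
    using G(2,4) unitary_mat_mult[OF unitary_G W(1)] by blast
qed

lemma column_clearing:
  assumes "Suc s < N" "unitary_mat N V" "leading_identity N s V"
  obtains Gs W where "list_all2 (\<lambda>(m, n). two_level_unitary N m n) (map (Pair s) [Suc s..<N]) Gs"
    "V = foldr (*) Gs W" "unitary_mat N W" "leading_identity N (Suc s) W"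
proof -
  obtain Gs W r where Gs: "list_all2 (\<lambda>(m, n). two_level_unitary N m n) (map (Pair s) [Suc s..<N]) Gs"
    and V: "V = foldr (*) Gs W" and W: "unitary_mat N W" "leading_identity N s W"
    and below: "\<forall>i. s < i \<and> i < N \<longrightarrow> W $$ (i, s) = 0"
    and r: "r \<ge> 0" "W $$ (s, s) = complex_of_real r"
    using column_elimination[OF _ _ assms(2,3), of N] assms(1) by auto
  have column: "\<forall>i<N. i \<noteq> s \<longrightarrow> W $$ (i, s) = 0"
  proof (intro allI impI)
    fix i
    assume "i < N" "i \<noteq> s"
    then show "W $$ (i, s) = 0"
      using below W(2) assms(1) unfolding leading_identity_def by (cases "i < s") auto
  qed
  have row: "\<forall>j<N. j \<noteq> s \<longrightarrow> W $$ (s, j) = 0"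
    using unitary_mat_unit_column(2)[OF W(1) _ column] assms(1) by simp
  have "cmod (W $$ (s, s)) = 1"
    using unitary_mat_unit_column(1)[OF W(1) _ column] assms(1) by simp
  then have diag: "W $$ (s, s) = 1"
    using r by simp
  have "leading_identity N (Suc s) W"
    using W(2) column row diag unfolding leading_identity_def by (metis less_antisym)
  then show ?thesis
    using that Gs V W(1) by blast
qed

definition givens_pairs :: "nat \<Rightarrow> nat \<Rightarrow> (nat \<times> nat) list" where
  "givens_pairs N s = concat (map (\<lambda>r. map (Pair r) [Suc r..<N]) [0..<s])"

lemma givens_pairs_Suc:
  "givens_pairs N (Suc s) = givens_pairs N s @ map (Pair s) [Suc s..<N]"
  by (simp add: givens_pairs_def)

lemma length_givens_pairs:
  "s \<le> N \<Longrightarrow> 2 * length (givens_pairs N s) + (N - s) * (N - s - 1) = N * (N - 1)"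
proof (induction s)
  case 0
  then show ?case
    by (simp add: givens_pairs_def)
next
  case (Suc s)
  then obtain d where "N = Suc s + d"
    using le_Suc_ex by blast
  with Suc show ?case
    by (cases d) (simp_all add: givens_pairs_Suc algebra_simps)
qed

lemma leading_columns_elimination:
  assumes "s < N" "unitary_mat N U"
  shows "\<exists>Ts V. list_all2 (\<lambda>(m, n). two_level_unitary N m n) (givens_pairs N s) Ts \<and>
      U = foldr (*) Ts V \<and> unitary_mat N V \<and> leading_identity N s V"
  using assms(1)
proof (induction s)
  case 0
  show ?case
    using assms(2) by (intro exI[of _ "[]"] exI[of _ U]) (simp add: givens_pairs_def leading_identity_def)
next
  case (Suc s)
  then obtain Ts V where Ts: "list_all2 (\<lambda>(m, n). two_level_unitary N m n) (givens_pairs N s) Ts"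
    and U: "U = foldr (*) Ts V" and V: "unitary_mat N V" "leading_identity N s V"
    by auto
  obtain Gs W where "list_all2 (\<lambda>(m, n). two_level_unitary N m n) (map (Pair s) [Suc s..<N]) Gs"
    "V = foldr (*) Gs W" "unitary_mat N W" "leading_identity N (Suc s) W"
    using column_clearing[OF Suc.prems V] .
  then show ?case
    using Ts U by (intro exI[of _ "Ts @ Gs"] exI[of _ W]) (simp add: givens_pairs_Suc list_all2_appendI)
qed

lemma leading_identity_two_level_unitary:
  assumes "2 \<le> N" "unitary_mat N V" "leading_identity N (N - 1) V"
  shows "two_level_unitary N (N - 2) (N - 1) V"
proof -
  define c where "c = V $$ (N - 1, N - 1)"
  have modes: "N - 2 < N - 1" "N - 1 < N"
    using assms(1) by simp_all
  have "\<forall>i<N. i \<noteq> N - 1 \<longrightarrow> V $$ (i, N - 1) = 0"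
  proof (intro allI impI)
    fix i
    assume "i < N" "i \<noteq> N - 1"
    then have "i < N - 1"
      by simp
    then show "V $$ (i, N - 1) = 0"
      using assms(3) modes(2) unfolding leading_identity_def by simp
  qed
  then have norm_c: "cmod c = 1"
    unfolding c_def by (rule unitary_mat_unit_column(1)[OF assms(2) modes(2)])
  then have "cis (Arg c) = sgn c"
    by (intro cis_Arg) auto
  also have "sgn c = c"
    using norm_c by (simp add: sgn_div_norm)
  finally have c: "cis (Arg c) = c" .
  have "V = two_level_mat N (N - 2) (N - 1) (cis (- Arg c)) 0 (Arg c)"
  proof (rule eq_matI)
    fix i j
    assume "i < dim_row (two_level_mat N (N - 2) (N - 1) (cis (- Arg c)) 0 (Arg c))"
      "j < dim_col (two_level_mat N (N - 2) (N - 1) (cis (- Arg c)) 0 (Arg c))"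
    then have ij: "i < N" "j < N"
      by simp_all
    show "V $$ (i, j) = two_level_mat N (N - 2) (N - 1) (cis (- Arg c)) 0 (Arg c) $$ (i, j)"
    proof (cases "i = N - 1 \<and> j = N - 1")
      case True
      then show ?thesis
        using modes c by (simp add: index_two_level_mat c_def cis_cnj)
    next
      case False
      then have "V $$ (i, j) = (if i = j then 1 else 0)"
        using assms(3) ij unfolding leading_identity_def by auto
      then show ?thesis
        using False ij modes by (auto simp: index_two_level_mat cis_mult)
    qed
  qed (use assms(2) in \<open>auto simp: unitary_mat_def\<close>)
  then show ?thesis
    using assms(2) modes unfolding two_level_unitary_iff by blast
qed

lemma two_level_factorization:
  assumes "2 \<le> N" "unitary_mat N U"
  obtains Ts where "list_all2 (\<lambda>(m, n). two_level_unitary N m n) (givens_pairs N (N - 1)) Ts"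
    "U = foldr (*) Ts (1\<^sub>m N)"
proof -
  obtain Ts V where Ts: "list_all2 (\<lambda>(m, n). two_level_unitary N m n) (givens_pairs N (N - 1)) Ts"
    and U: "U = foldr (*) Ts V" and V: "unitary_mat N V" "leading_identity N (N - 1) V"
    using leading_columns_elimination[of "N - 1" N U] assms by auto
  have "N - 1 = Suc (N - 2)" "[Suc (N - 2)..<N] = [N - 1]"
    using assms(1) by (simp_all add: upt_conv_Cons)
  then have pairs: "givens_pairs N (N - 1) = givens_pairs N (N - 2) @ [(N - 2, N - 1)]"
    by (simp add: givens_pairs_Suc)
  obtain Ts' T where Ts': "list_all2 (\<lambda>(m, n). two_level_unitary N m n) (givens_pairs N (N - 2)) Ts'"
    and T: "two_level_unitary N (N - 2) (N - 1) T" and Ts_eq: "Ts = Ts' @ [T]"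
    using Ts unfolding pairs list_all2_append1 list_all2_Cons1 by auto
  have TV: "two_level_unitary N (N - 2) (N - 1) (T * V)"
    using two_level_unitary_mult[OF T leading_identity_two_level_unitary[OF assms(1) V]] .
  then have "T * V * 1\<^sub>m N = T * V"
    unfolding two_level_unitary_def unitary_mat_def by (meson right_mult_one_mat)
  then have "U = foldr (*) (Ts' @ [T * V]) (1\<^sub>m N)"
    unfolding U Ts_eq by simp
  moreover have "list_all2 (\<lambda>(m, n). two_level_unitary N m n) (givens_pairs N (N - 1)) (Ts' @ [T * V])"
    unfolding pairs using Ts' TV by (simp add: list_all2_appendI)
  ultimately show ?thesis
    using that by blast
qed

theorem proposition1:
  fixes N :: nat and U :: "real \<Rightarrow> complex mat"
  assumes "N \<ge> 2"
    and "\<forall>\<omega>. unitary_mat N (U \<omega>)"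
    and "\<forall>i<N. \<forall>j<N. smooth_fun (\<lambda>\<omega>. U \<omega> $$ (i, j))"
  shows "\<exists>(K :: nat) (m :: nat \<Rightarrow> nat) (n :: nat \<Rightarrow> nat) (T :: nat \<Rightarrow> real \<Rightarrow> complex mat).
           K \<le> N * (N - 1) div 2 \<and>
           (\<forall>k<K. m k < n k \<and> n k < N \<and> (\<forall>\<omega>. two_level_unitary N (m k) (n k) (T k \<omega>))) \<and>
           (\<forall>\<omega>. U \<omega> = foldr (\<lambda>k A. T k \<omega> * A) [0..<K] (1\<^sub>m N))"
proof -
  define ps where "ps = givens_pairs N (N - 1)"
  have "\<forall>\<omega>. \<exists>Ts. list_all2 (\<lambda>(m, n). two_level_unitary N m n) ps Ts \<and> U \<omega> = foldr (*) Ts (1\<^sub>m N)"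
    using two_level_factorization[OF assms(1) assms(2)[rule_format]] unfolding ps_def by metis
  then obtain Ts where Ts: "\<And>\<omega>. list_all2 (\<lambda>(m, n). two_level_unitary N m n) ps (Ts \<omega>)"
    "\<And>\<omega>. U \<omega> = foldr (*) (Ts \<omega>) (1\<^sub>m N)"
    by metis
  have length_ps: "length ps = N * (N - 1) div 2"
    using length_givens_pairs[of "N - 1" N] assms(1) unfolding ps_def by simp
  have factors: "two_level_unitary N (fst (ps ! k)) (snd (ps ! k)) (Ts \<omega> ! k)" if "k < length ps" for k \<omega>
    using list_all2_nthD[OF Ts(1) that] by (simp add: case_prod_beta)
  then have modes: "fst (ps ! k) < snd (ps ! k) \<and> snd (ps ! k) < N" if "k < length ps" for k
    using that unfolding two_level_unitary_def by blast
  have product: "U \<omega> = foldr (\<lambda>k A. Ts \<omega> ! k * A) [0..<length ps] (1\<^sub>m N)" for \<omega>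
  proof -
    have "foldr (\<lambda>k A. Ts \<omega> ! k * A) [0..<length ps] (1\<^sub>m N) =
        foldr (*) (map ((!) (Ts \<omega>)) [0..<length (Ts \<omega>)]) (1\<^sub>m N)"
      by (simp add: foldr_map comp_def list_all2_lengthD[OF Ts(1)[of \<omega>]])
    also have "\<dots> = U \<omega>"
      by (simp add: map_nth Ts(2))
    finally show ?thesis ..
  qed
  show ?thesis
  proof (rule exI[of _ "length ps"], rule exI[of _ "\<lambda>k. fst (ps ! k)"],
      rule exI[of _ "\<lambda>k. snd (ps ! k)"], rule exI[of _ "\<lambda>k \<omega>. Ts \<omega> ! k"], intro conjI)
    show "length ps \<le> N * (N - 1) div 2"
      using length_ps by simp
  qed (use modes factors product in auto)
qed

end
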